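(* Let $d\le 3$ be a positive integer, let $\tau_1,\dots,\tau_d$ and $n_1,\dots,n_d$ be positive integers, and consider the generic $d$-degree polynomial multiparameter eigenvalue problem $P_i(x_1,\dots,x_d)\mathbf{v}_i=0$, $1\le i\le d$, where $P_i(x_1,\dots,x_d)=\sum_{i_1=0}^{\tau_1}\cdots\sum_{i_d=0}^{\tau_d}P^{(i)}_{i_1,\dots,i_d}x_1^{i_1}\cdots x_d^{i_d}$ and the entries of all the $n_i\times n_i$ coefficient matrices $P^{(i)}_{i_1,\dots,i_d}$ (over all $i$ and all multi-indices) are distinct indeterminates. Then the hidden variable tensor Dixon resultant $R(x_d)$ of this problem is nonsingular, i.e. $\det R(x_d)$ is not the zero polynomial.
   Context: Let $N=\prod_{i=1}^d n_i$. Kronecker block determinant: for a $d\times d$ array $M=(M_{ij})$ with $M_{ij}$ of size $n_i\times n_i$, $|M|_\otimes=\sum_{\sigma\in S_d}\mathrm{sgn}(\sigma)\,M_{1,\sigma(1)}\otimes\cdots\otimes M_{d,\sigma(d)}$. Tensor Dixon function (with $x_d$ hidden): with variables $s_1,\dots,s_{d-1},t_1,\dots,t_{d-1},x_d$, let $M_{ij}=P_i(t_1,\dots,t_{j-1},s_j,\dots,s_{d-1},x_d)$ for $1\le i,j\le d$, and $f_{\text{Dixon}}=|M|_\otimes/\prod_{i=1}^{d-1}(s_i-t_i)$ (for $d=1$, $f_{\text{Dixon}}=P_1(x_1)$), a matrix polynomial of degree at most $\alpha_i=i\tau_i-1$ in $s_i$ and at most $\beta_i=(d-i)\tau_i-1$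 in $t_i$. Expand $f_{\text{Dixon}}=\sum_{\mathbf{i},\mathbf{j}}A_{\mathbf{i},\mathbf{j}}(x_d)\prod_k s_k^{i_k}\prod_k t_k^{j_k}$ over $0\le i_k\le\alpha_k$, $0\le j_k\le\beta_k$. The hidden variable tensor Dixon resultant $R(x_d)$ is the square block matrix of size $N(d-1)!\prod_{k=1}^{d-1}\tau_k$ whose block columns (width $N$) are indexed by $s$-exponents $\mathbf{i}$ and block rows by $t$-exponents $\mathbf{j}$, with block $(\mathbf{j},\mathbf{i})$ equal to $A_{\mathbf{i},\mathbf{j}}(x_d)$; its entries are polynomials in $x_d$ and the indeterminates. *)

theory Defs
  imports "HOL-Library.Poly_Mapping" "HOL-Library.Nat_Bijection"
          "Jordan_Normal_Form.Determinant"
begin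

type_synonym mpoly = "(nat \<Rightarrow>\<^sub>0 nat) \<Rightarrow>\<^sub>0 complex"

definition mvar :: "nat \<Rightarrow> mpoly" where
  "mvar v = Poly_Mapping.single (Poly_Mapping.single v 1) 1"

text \<open>Encoding of the different kinds of indeterminates into nat (injective):
  the hidden variable x_d, the Dixon variables s_k, t_k, and the coefficient
  indeterminate for entry (r,c) of the coefficient matrix P^(i)_e, where the
  multi-index e = (i_1,...,i_d) is given as a list.\<close>
definition vX :: nat where "vX = prod_encode (0, 0)"
definition vS :: "nat \<Rightarrow> nat" where "vS k = prod_encode (1, k)"
definition vT :: "nat \<Rightarrow> nat" where "vT k = prod_encode (2, k)"
definition vC :: "nat \<Rightarrow> nat list \<Rightarrow> nat \<Rightarrow> nat \<Rightarrow> nat" where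
  "vC i e r c = prod_encode (3, list_encode [i, list_encode e, r, c])"

text \<open>Multi-indices (i_1,...,i_d) with 0 <= i_k <= tau_k (list position k-1 holds i_k).\<close>
definition multi_indices :: "nat \<Rightarrow> (nat \<Rightarrow> nat) \<Rightarrow> nat list set" where
  "multi_indices d \<tau> = {e. length e = d \<and> (\<forall>k<d. e ! k \<le> \<tau> (Suc k))}"

text \<open>P_i(y_1,...,y_d) with generic coefficient matrices; the arguments y_k are
  given as a list ys (position k-1 holds y_k). Indices i are 1-based.\<close>
definition Pgen :: "nat \<Rightarrow> (nat \<Rightarrow> nat) \<Rightarrow> (nat \<Rightarrow> nat) \<Rightarrow> nat \<Rightarrow> mpoly list \<Rightarrow> mpoly mat" where
  "Pgen d \<tau> n i ys = mat (n i) (n i) (\<lambda>(r, c).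
      \<Sum>e\<in>multi_indices d \<tau>. (\<Prod>k<d. (ys ! k) ^ (e ! k)) * mvar (vC i e r c))"

definition kron :: "'a::semiring_1 mat \<Rightarrow> 'a mat \<Rightarrow> 'a mat" where
  "kron A B = mat (dim_row A * dim_row B) (dim_col A * dim_col B)
     (\<lambda>(i, j). A $$ (i div dim_row B, j div dim_col B) * B $$ (i mod dim_row B, j mod dim_col B))"

definition kron_list :: "'a::semiring_1 mat list \<Rightarrow> 'a mat" where
  "kron_list As = foldr kron As (1\<^sub>m 1)"

text \<open>|M|_otimes for a d x d array M (0-based indices here), where block row i has
  size m i x m i; the result has size (prod of m i).\<close>
definition kron_block_det :: "nat \<Rightarrow> (nat \<Rightarrow> nat) \<Rightarrow> (nat \<Rightarrow> nat \<Rightarrow> 'a::comm_ring_1 mat) \<Rightarrow> 'a mat" where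
  "kron_block_det d m M = mat (\<Prod>i<d. m i) (\<Prod>i<d. m i) (\<lambda>ij.
      \<Sum>\<sigma> | \<sigma> permutes {..<d}. of_int (sign \<sigma>) * kron_list (map (\<lambda>i. M i (\<sigma> i)) [0..<d]) $$ ij)"

text \<open>M_{ij} = P_i(t_1,...,t_{j-1}, s_j,...,s_{d-1}, x_d), 1 <= i,j <= d
  (stored 0-based: Mdixon d tau n i' j' = M_{i'+1, j'+1}).\<close>
definition Mdixon :: "nat \<Rightarrow> (nat \<Rightarrow> nat) \<Rightarrow> (nat \<Rightarrow> nat) \<Rightarrow> nat \<Rightarrow> nat \<Rightarrow> mpoly mat" where
  "Mdixon d \<tau> n i j = Pgen d \<tau> n (Suc i)
     (map (\<lambda>k. if k < j then mvar (vT (Suc k)) else mvar (vS (Suc k))) [0..<d - 1] @ [mvar vX])"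

definition exact_div :: "mpoly \<Rightarrow> mpoly \<Rightarrow> mpoly" where
  "exact_div a b = (SOME q. a = q * b)"

definition Nsize :: "nat \<Rightarrow> (nat \<Rightarrow> nat) \<Rightarrow> nat" where
  "Nsize d n = (\<Prod>k\<in>{1..d}. n k)"

definition f_dixon :: "nat \<Rightarrow> (nat \<Rightarrow> nat) \<Rightarrow> (nat \<Rightarrow> nat) \<Rightarrow> mpoly mat" where
  "f_dixon d \<tau> n =
     (let B = kron_block_det d (\<lambda>i. n (Suc i)) (Mdixon d \<tau> n);
          D = (\<Prod>k\<in>{1..<d}. mvar (vS k) - mvar (vT k))
      in mat (dim_row B) (dim_col B) (\<lambda>ij. exact_div (B $$ ij) D))"

text \<open>Coefficient of s_1^{a 1}...s_{d-1}^{a (d-1)} t_1^{b 1}...t_{d-1}^{b (d-1)} in a polynomial p,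
  viewed as a polynomial in the s,t variables with coefficients polynomials in the
  remaining indeterminates (x_d and the coefficient indeterminates).\<close>
definition st_vars :: "nat \<Rightarrow> nat set" where
  "st_vars d = vS ` {1..<d} \<union> vT ` {1..<d}"

definition strip_st :: "nat \<Rightarrow> (nat \<Rightarrow>\<^sub>0 nat) \<Rightarrow> (nat \<Rightarrow>\<^sub>0 nat)" where
  "strip_st d m = (\<Sum>v\<in>Poly_Mapping.keys m - st_vars d. Poly_Mapping.single v (Poly_Mapping.lookup m v))"

definition coeff_st :: "nat \<Rightarrow> mpoly \<Rightarrow> (nat \<Rightarrow> nat) \<Rightarrow> (nat \<Rightarrow> nat) \<Rightarrow> mpoly" where
  "coeff_st d p a b = (\<Sum>m\<in>Poly_Mapping.keys p.
      if (\<forall>k\<in>{1..<d}. Poly_Mapping.lookup m (vS k) = a k \<and> Poly_Mapping.lookup m (vT k) = b k)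
      then Poly_Mapping.single (strip_st d m) (Poly_Mapping.lookup p m) else 0)"

text \<open>Degree bounds: alpha_k + 1 = k tau_k, beta_k + 1 = (d-k) tau_k.
  Exponent vectors are enumerated in mixed radix (exponent of the first variable
  varying fastest); q-th s-exponent vector and q-th t-exponent vector: \<close>
definition s_exp :: "nat \<Rightarrow> (nat \<Rightarrow> nat) \<Rightarrow> nat \<Rightarrow> nat \<Rightarrow> nat" where
  "s_exp d \<tau> q k = (q div (\<Prod>l\<in>{1..<k}. l * \<tau> l)) mod (k * \<tau> k)"

definition t_exp :: "nat \<Rightarrow> (nat \<Rightarrow> nat) \<Rightarrow> nat \<Rightarrow> nat \<Rightarrow> nat" where
  "t_exp d \<tau> q k = (q div (\<Prod>l\<in>{1..<k}. (d - l) * \<tau> l)) mod ((d - k) * \<tau> k)"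

text \<open>Number of block columns/rows: prod_k (alpha_k + 1) = (d-1)! prod_k tau_k.\<close>
definition nblocks :: "nat \<Rightarrow> (nat \<Rightarrow> nat) \<Rightarrow> nat" where
  "nblocks d \<tau> = (\<Prod>k\<in>{1..<d}. k * \<tau> k)"

text \<open>Hidden variable tensor Dixon resultant: block (j,i) (block row = t-exponent j,
  block column = s-exponent i) is A_{i,j}(x_d).\<close>
definition dixon_resultant :: "nat \<Rightarrow> (nat \<Rightarrow> nat) \<Rightarrow> (nat \<Rightarrow> nat) \<Rightarrow> mpoly mat" where
  "dixon_resultant d \<tau> n =
     (let N = Nsize d n; F = f_dixon d \<tau> n; K = nblocks d \<tau>
      in mat (K * N) (K * N) (\<lambda>(r, c).
           coeff_st d (F $$ (r mod N, c mod N)) (s_exp d \<tau> (c div N)) (t_exp d \<tau> (r div N))))"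

end

theory Submission
  imports Defs "HOL-Combinatorics.Permutations"
begin

text \<open>
  Substituting 0 or 1 for the entries of the coefficient matrices is a ring homomorphism that
  commutes with determinants and with taking coefficients in \<open>s, t\<close>, so it suffices to exhibit one
  such specialisation with a nonsingular resultant. If every \<open>P\<^sup>(\<^sup>i\<^sup>)\<^sub>e\<close> becomes the identity or
  zero, then \<open>P\<^sub>i\<close> becomes \<open>p\<^sub>i(x) I\<close> for a scalar polynomial \<open>p\<^sub>i\<close>, the Kronecker block determinant
  becomes \<open>\<Delta> I\<close> with \<open>\<Delta>\<close> the ordinary determinant of the scalar Dixon array, the Dixon function
  becomes \<open>\<delta> I\<close> with \<open>\<delta> = \<Delta> / \<Prod>\<^sub>k (s\<^sub>k - t\<^sub>k)\<close>, and the resultant becomes \<open>C \<otimes> I\<close> with \<open>C\<close>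
  the coefficient matrix of \<open>\<delta>\<close>. The choices \<open>p\<^sub>1 = 1\<close> for \<open>d = 1\<close>; \<open>p\<^sub>1 = x\<^sub>1^\<tau>\<^sub>1, p\<^sub>2 = 1\<close> for
  \<open>d = 2\<close>; and \<open>p\<^sub>1 = x\<^sub>1^\<tau>\<^sub>1, p\<^sub>2 = x\<^sub>2^\<tau>\<^sub>2, p\<^sub>3 = 1 + x\<^sub>1^\<tau>\<^sub>1 x\<^sub>2^\<tau>\<^sub>2\<close> for \<open>d = 3\<close> give
  \<open>\<Delta> = 1\<close>, \<open>\<Delta> = s\<^sub>1^\<tau>\<^sub>1 - t\<^sub>1^\<tau>\<^sub>1\<close> and
  \<open>\<Delta> = (s\<^sub>1^\<tau>\<^sub>1 - t\<^sub>1^\<tau>\<^sub>1) (s\<^sub>2^\<tau>\<^sub>2 - t\<^sub>2^\<tau>\<^sub>2) (1 - t\<^sub>1^\<tau>\<^sub>1 s\<^sub>2^\<tau>\<^sub>2)\<close>, and in each case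
  \<open>C\<close> is a signed permutation matrix. The division by \<open>\<Prod>\<^sub>k (s\<^sub>k - t\<^sub>k)\<close> in the generic Dixon function is
  exact because consecutive block columns of the Dixon array agree modulo \<open>s\<^sub>j - t\<^sub>j\<close>.
\<close>

section \<open>Specialising indeterminates\<close>

definition sum_terms :: "('a \<Rightarrow> 'b \<Rightarrow> 'c) \<Rightarrow> ('a \<Rightarrow>\<^sub>0 'b::zero) \<Rightarrow> 'c::comm_monoid_add" where
  "sum_terms f p = (\<Sum>m\<in>Poly_Mapping.keys p. f m (Poly_Mapping.lookup p m))"

definition additive_in_coeff :: "('a \<Rightarrow> 'b::monoid_add \<Rightarrow> 'c::monoid_add) \<Rightarrow> bool" where
  "additive_in_coeff f \<longleftrightarrow> (\<forall>m. f m 0 = 0 \<and> (\<forall>a b. f m (a + b) = f m a + f m b))"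

lemma sum_terms_eq_sum_superset:
  assumes "additive_in_coeff f" "finite K" "Poly_Mapping.keys p \<subseteq> K"
  shows "sum_terms f p = (\<Sum>m\<in>K. f m (Poly_Mapping.lookup p m))"
  unfolding sum_terms_def
  by (rule sum.mono_neutral_left) (use assms in \<open>auto simp: additive_in_coeff_def in_keys_iff\<close>)

lemma sum_terms_add:
  fixes f :: "'a \<Rightarrow> 'b::comm_monoid_add \<Rightarrow> 'c::comm_monoid_add"
  assumes "additive_in_coeff f"
  shows "sum_terms f (p + q) = sum_terms f p + sum_terms f q"
proof -
  let ?K = "Poly_Mapping.keys p \<union> Poly_Mapping.keys q"
  have "sum_terms f (p + q) = (\<Sum>m\<in>?K. f m (Poly_Mapping.lookup (p + q) m))"
    by (rule sum_terms_eq_sum_superset[OF assms _ keys_add]) simp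
  also have "\<dots> = (\<Sum>m\<in>?K. f m (Poly_Mapping.lookup p m) + f m (Poly_Mapping.lookup q m))"
    using assms by (simp add: lookup_add additive_in_coeff_def)
  also have "\<dots> = sum_terms f p + sum_terms f q"
    using sum_terms_eq_sum_superset[OF assms, of ?K p] sum_terms_eq_sum_superset[OF assms, of ?K q]
    by (simp add: sum.distrib)
  finally show ?thesis .
qed

lemma sum_terms_zero [simp]: "sum_terms f 0 = 0"
  by (simp add: sum_terms_def)

lemma sum_terms_single:
  assumes "additive_in_coeff f"
  shows "sum_terms f (Poly_Mapping.single m c) = f m c"
  using assms by (cases "c = 0") (auto simp: sum_terms_def additive_in_coeff_def)

lemma sum_terms_sum:
  fixes f :: "'a \<Rightarrow> 'b::comm_monoid_add \<Rightarrow> 'c::comm_monoid_add"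
  assumes "additive_in_coeff f"
  shows "sum_terms f (sum g A) = (\<Sum>a\<in>A. sum_terms f (g a))"
  by (induction A rule: infinite_finite_induct) (simp_all add: sum_terms_add[OF assms])

lemma sum_terms_single_eq: "sum_terms Poly_Mapping.single p = p"
proof (rule poly_mapping_eqI)
  fix k
  have "Poly_Mapping.lookup (sum_terms Poly_Mapping.single p) k
      = (\<Sum>m\<in>Poly_Mapping.keys p. Poly_Mapping.lookup p m when m = k)"
    by (simp add: sum_terms_def lookup_sum lookup_single)
  also have "\<dots> = Poly_Mapping.lookup p k"
    by (cases "k \<in> Poly_Mapping.keys p") (auto simp: when_def in_keys_iff)
  finally show "Poly_Mapping.lookup (sum_terms Poly_Mapping.single p) k = Poly_Mapping.lookup p k" .
qed

definition drop_vars :: "nat set \<Rightarrow> (nat \<Rightarrow>\<^sub>0 nat) \<Rightarrow> (nat \<Rightarrow>\<^sub>0 nat)" where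
  "drop_vars U m = Poly_Mapping.mapp (\<lambda>v k. if v \<in> U then 0 else k) m"

lemma lookup_drop_vars:
  "Poly_Mapping.lookup (drop_vars U m) v = (if v \<in> U then 0 else Poly_Mapping.lookup m v)"
  by (auto simp: drop_vars_def lookup_mapp when_def in_keys_iff)

lemma drop_vars_add: "drop_vars U (m + m') = drop_vars U m + drop_vars U m'"
  by (rule poly_mapping_eqI) (simp add: lookup_drop_vars lookup_add)

definition specialise_term :: "nat set \<Rightarrow> nat set \<Rightarrow> (nat \<Rightarrow>\<^sub>0 nat) \<Rightarrow> complex \<Rightarrow> mpoly" where
  "specialise_term Z U m c =
     (if \<forall>v\<in>Z. Poly_Mapping.lookup m v = 0 then Poly_Mapping.single (drop_vars U m) c else 0)"

definition specialise :: "nat set \<Rightarrow> nat set \<Rightarrow> mpoly \<Rightarrow> mpoly" where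
  "specialise Z U = sum_terms (specialise_term Z U)"

lemma additive_specialise_term: "additive_in_coeff (specialise_term Z U)"
  by (auto simp: additive_in_coeff_def specialise_term_def single_add)

lemma specialise_single: "specialise Z U (Poly_Mapping.single m c) = specialise_term Z U m c"
  by (simp add: specialise_def sum_terms_single[OF additive_specialise_term])

lemma specialise_term_add_mult:
  "specialise_term Z U (m + m') (c * c') = specialise_term Z U m c * specialise_term Z U m' c'"
  by (auto simp: specialise_term_def lookup_add drop_vars_add mult_single)

lemma specialise_mult: "specialise Z U (p * q) = specialise Z U p * specialise Z U q"
proof -
  let ?P = "Poly_Mapping.keys p" and ?Q = "Poly_Mapping.keys q"
  let ?a = "Poly_Mapping.lookup p" and ?b = "Poly_Mapping.lookup q"
  let ?\<phi> = "specialise_term Z U"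
  have "p * q = (\<Sum>m\<in>?P. Poly_Mapping.single m (?a m)) * (\<Sum>m'\<in>?Q. Poly_Mapping.single m' (?b m'))"
    by (simp only: sum_terms_def[symmetric] sum_terms_single_eq)
  also have "\<dots> = (\<Sum>m\<in>?P. \<Sum>m'\<in>?Q. Poly_Mapping.single (m + m') (?a m * ?b m'))"
    by (simp add: sum_distrib_left sum_distrib_right mult_single sum.swap[of _ ?Q])
  finally have "specialise Z U (p * q) = (\<Sum>m\<in>?P. \<Sum>m'\<in>?Q. ?\<phi> m (?a m) * ?\<phi> m' (?b m'))"
    by (simp add: specialise_def sum_terms_sum[OF additive_specialise_term]
        sum_terms_single[OF additive_specialise_term] specialise_term_add_mult)
  also have "\<dots> = specialise Z U p * specialise Z U q"
    by (simp add: sum_product specialise_def sum_terms_def)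
  finally show ?thesis .
qed

lemma specialise_one: "specialise Z U 1 = 1"
proof -
  have "drop_vars U 0 = 0"
    by (rule poly_mapping_eqI) (simp add: lookup_drop_vars)
  then show ?thesis
    using specialise_single[of Z U 0 1] by (simp add: specialise_term_def)
qed

interpretation specialise: comm_ring_hom "specialise Z U"
proof
  show "specialise Z U (p + q) = specialise Z U p + specialise Z U q" for p q
    by (simp add: specialise_def sum_terms_add[OF additive_specialise_term])
  show "specialise Z U (p * q) = specialise Z U p * specialise Z U q" for p q
    by (rule specialise_mult)
  show "specialise Z U 1 = 1"
    by (rule specialise_one)
  show "specialise Z U 0 = 0"
    by (simp add: specialise_def)
qed

lemma specialise_mvar:
  "specialise Z U (mvar v) = (if v \<in> Z then 0 else if v \<in> U then 1 else mvar v)"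
proof -
  have "drop_vars U (Poly_Mapping.single v 1) = (if v \<in> U then 0 else Poly_Mapping.single v 1)"
    by (rule poly_mapping_eqI) (auto simp: lookup_drop_vars lookup_single when_def)
  then show ?thesis
    by (auto simp: mvar_def specialise_single specialise_term_def lookup_single when_def)
qed

lemma var_codes_inject [simp]:
  "vS k = vS l \<longleftrightarrow> k = l" "vT k = vT l \<longleftrightarrow> k = l"
  "vC i e r c = vC i' e' r' c' \<longleftrightarrow> i = i' \<and> e = e' \<and> r = r' \<and> c = c'"
  by (auto simp: vS_def vT_def vC_def list_encode_eq)

lemma var_codes_distinct [simp]:
  "vS k \<noteq> vT l" "vT l \<noteq> vS k" "vS k \<noteq> vX" "vT k \<noteq> vX"
  "vC i e r c \<noteq> vS k" "vC i e r c \<noteq> vT k" "vC i e r c \<noteq> vX"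
  "vS k \<noteq> vC i e r c" "vT k \<noteq> vC i e r c" "vX \<noteq> vC i e r c"
  by (auto simp: vS_def vT_def vX_def vC_def)

definition coeff_st_term :: "nat \<Rightarrow> (nat \<Rightarrow> nat) \<Rightarrow> (nat \<Rightarrow> nat) \<Rightarrow> (nat \<Rightarrow>\<^sub>0 nat) \<Rightarrow> complex \<Rightarrow> mpoly" where
  "coeff_st_term d a b m c =
     (if \<forall>k\<in>{1..<d}. Poly_Mapping.lookup m (vS k) = a k \<and> Poly_Mapping.lookup m (vT k) = b k
      then Poly_Mapping.single (strip_st d m) c else 0)"

lemma coeff_st_eq_sum_terms: "coeff_st d p a b = sum_terms (coeff_st_term d a b) p"
  unfolding coeff_st_def sum_terms_def coeff_st_term_def ..

lemma additive_coeff_st_term: "additive_in_coeff (coeff_st_term d a b)"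
  by (auto simp: additive_in_coeff_def coeff_st_term_def single_add)

lemma coeff_st_single: "coeff_st d (Poly_Mapping.single m c) a b = coeff_st_term d a b m c"
  by (simp add: coeff_st_eq_sum_terms sum_terms_single[OF additive_coeff_st_term])

interpretation coeff_st: additive "\<lambda>p. coeff_st d p a b"
  by standard (simp add: coeff_st_eq_sum_terms sum_terms_add[OF additive_coeff_st_term])

lemma lookup_strip_st:
  "Poly_Mapping.lookup (strip_st d m) v = (if v \<in> st_vars d then 0 else Poly_Mapping.lookup m v)"
proof -
  have "Poly_Mapping.lookup (strip_st d m) v =
      (\<Sum>u\<in>Poly_Mapping.keys m - st_vars d. Poly_Mapping.lookup m u when u = v)"
    by (simp add: strip_st_def lookup_sum lookup_single)
  also have "\<dots> = (if v \<in> st_vars d then 0 else Poly_Mapping.lookup m v)"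
    by (cases "v \<in> Poly_Mapping.keys m - st_vars d") (auto simp: when_def in_keys_iff)
  finally show ?thesis .
qed

lemma specialise_coeff_st:
  assumes "Z \<inter> st_vars d = {}" "U \<inter> st_vars d = {}"
  shows "specialise Z U (coeff_st d p a b) = coeff_st d (specialise Z U p) a b"
proof -
  have st: "vS k \<in> st_vars d" "vT k \<in> st_vars d" if "k \<in> {1..<d}" for k
    using that by (auto simp: st_vars_def)
  have "(\<forall>v\<in>Z. Poly_Mapping.lookup (strip_st d m) v = 0) \<longleftrightarrow> (\<forall>v\<in>Z. Poly_Mapping.lookup m v = 0)" for m
    using assms(1) by (auto simp: lookup_strip_st)
  moreover have "Poly_Mapping.lookup (drop_vars U m) (vS k) = Poly_Mapping.lookup m (vS k)"
    "Poly_Mapping.lookup (drop_vars U m) (vT k) = Poly_Mapping.lookup m (vT k)" if "k \<in> {1..<d}" for m k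
    using assms(2) st[OF that] by (auto simp: lookup_drop_vars)
  moreover have "strip_st d (drop_vars U m) = drop_vars U (strip_st d m)" for m
    by (rule poly_mapping_eqI) (simp add: lookup_strip_st lookup_drop_vars)
  ultimately have term_eq:
    "specialise Z U (coeff_st_term d a b m c) = coeff_st d (specialise_term Z U m c) a b" for m c
    by (simp add: specialise_single coeff_st_single coeff_st.zero coeff_st_term_def specialise_term_def)
  have "specialise Z U (coeff_st d p a b) =
      (\<Sum>m\<in>Poly_Mapping.keys p. specialise Z U (coeff_st_term d a b m (Poly_Mapping.lookup p m)))"
    by (simp add: coeff_st_eq_sum_terms sum_terms_def specialise.hom_sum)
  also have "\<dots> =
      (\<Sum>m\<in>Poly_Mapping.keys p. coeff_st d (specialise_term Z U m (Poly_Mapping.lookup p m)) a b)"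
    by (simp only: term_eq)
  also have "\<dots> = coeff_st d (specialise Z U p) a b"
    by (simp add: coeff_st.sum specialise_def sum_terms_def)
  finally show ?thesis .
qed

definition st_monomial :: "nat \<Rightarrow> (nat \<Rightarrow> nat) \<Rightarrow> (nat \<Rightarrow> nat) \<Rightarrow> mpoly" where
  "st_monomial d a b = (\<Prod>k\<in>{1..<d}. mvar (vS k) ^ a k * mvar (vT k) ^ b k)"

lemma mvar_power: "mvar v ^ k = Poly_Mapping.single (Poly_Mapping.single v k) 1"
  by (induction k) (simp_all add: mvar_def mult_single flip: single_add)

lemma prod_single_one:
  "(\<Prod>k\<in>A. Poly_Mapping.single (f k) (1::'b::comm_semiring_1)) = Poly_Mapping.single (sum f A) 1"
  by (induction A rule: infinite_finite_induct) (simp_all add: mult_single)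

lemma coeff_st_st_monomial:
  "coeff_st d (st_monomial d a b) a' b' =
     (if \<forall>k\<in>{1..<d}. a k = a' k \<and> b k = b' k then 1 else 0)"
proof -
  define m where "m = (\<Sum>k\<in>{1..<d}. Poly_Mapping.single (vS k) (a k) + Poly_Mapping.single (vT k) (b k))"
  have "st_monomial d a b = Poly_Mapping.single m 1"
    by (simp add: st_monomial_def m_def mvar_power mult_single prod_single_one flip: single_add)
  moreover have "Poly_Mapping.lookup m (vS k) = a k" "Poly_Mapping.lookup m (vT k) = b k"
    if "k \<in> {1..<d}" for k
    using that by (simp_all add: m_def lookup_sum lookup_add lookup_single when_def)
  moreover have "strip_st d m = 0"
  proof (rule poly_mapping_eqI)
    fix v
    have "Poly_Mapping.lookup m v = 0" if "v \<notin> st_vars d"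
      using that
      by (auto simp: m_def lookup_sum lookup_add lookup_single when_def st_vars_def intro!: sum.neutral)
    then show "Poly_Mapping.lookup (strip_st d m) v = Poly_Mapping.lookup 0 v"
      by (simp add: lookup_strip_st)
  qed
  ultimately show ?thesis
    by (auto simp: coeff_st_single coeff_st_term_def)
qed

lemma det_zero_row:
  assumes "A \<in> carrier_mat n n" "k < n" "\<And>x. x < n \<Longrightarrow> A $$ (k, x) = 0"
  shows "det A = 0"
proof -
  have "(\<Prod>i = 0..<n. A $$ (i, p i)) = 0" if "p permutes {0..<n}" for p
    using assms that by (intro prod_zero bexI[of _ k]) (auto dest: permutes_in_image)
  then show ?thesis
    by (simp add: det_def'[OF assms(1)])
qed

lemma det_signed_permutation_neq_0:
  fixes A :: "'a::comm_ring_1 mat"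
  assumes A: "A \<in> carrier_mat n n"
    and entries: "\<And>r c. r < n \<Longrightarrow> c < n \<Longrightarrow> A $$ (r, c) = (if c = \<sigma> r then \<epsilon> r else 0)"
    and \<sigma>: "\<sigma> ` {..<n} \<subseteq> {..<n}" "inj_on \<sigma> {..<n}"
    and \<epsilon>: "\<And>r. r < n \<Longrightarrow> \<epsilon> r * \<epsilon> r = 1"
  shows "det A \<noteq> 0"
proof -
  have "A * transpose_mat A = 1\<^sub>m n"
  proof (rule eq_matI)
    fix i j assume "i < dim_row (1\<^sub>m n)" "j < dim_col (1\<^sub>m n)"
    then have i: "i < n" and j: "j < n" by auto
    have \<sigma>i: "\<sigma> i < n"
      using \<sigma>(1) i by auto
    have "(A * transpose_mat A) $$ (i, j) = (\<Sum>k = 0..<n. A $$ (i, k) * A $$ (j, k))"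
      using A i j by (simp add: scalar_prod_def)
    also have "\<dots> = (\<Sum>k = 0..<n. if k = \<sigma> i then \<epsilon> i * A $$ (j, k) else 0)"
      by (rule sum.cong) (auto simp: entries i)
    also have "\<dots> = \<epsilon> i * A $$ (j, \<sigma> i)"
      using \<sigma>i by auto
    also have "\<dots> = 1\<^sub>m n $$ (i, j)"
      using entries[OF j \<sigma>i] \<sigma>(2) \<epsilon> i j by (auto simp: inj_on_def)
    finally show "(A * transpose_mat A) $$ (i, j) = 1\<^sub>m n $$ (i, j)" .
  qed (use A in auto)
  then have "det A * det (transpose_mat A) = 1"
    using det_mult[OF A, of "transpose_mat A"] A by auto
  then show ?thesis
    by auto
qed

lemma eq_add_mult_iff:
  fixes c x y t :: nat
  assumes "x < t"
  shows "c = x + t * y \<longleftrightarrow> c mod t = x \<and> c div t = y"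
  using assms by (auto simp: mult.commute[of t])

lemma add_mult_less:
  fixes x y t m :: nat
  assumes "x < t" "y < m"
  shows "x + t * y < t * m"
proof -
  have "x + t * y < t * Suc y"
    using assms(1) by simp
  also have "\<dots> \<le> t * m"
    using assms(2) by (intro mult_le_mono2) simp
  finally show ?thesis .
qed

lemma det_block_signed_permutation_neq_0:
  fixes A :: "'a::comm_ring_1 mat"
  assumes A: "A \<in> carrier_mat (K * N) (K * N)"
    and entries: "\<And>r c. r < K * N \<Longrightarrow> c < K * N \<Longrightarrow>
      A $$ (r, c) = (if r mod N = c mod N \<and> c div N = \<sigma> (r div N) then \<epsilon> (r div N) else 0)"
    and \<sigma>: "\<sigma> ` {..<K} \<subseteq> {..<K}" "inj_on \<sigma> {..<K}"
    and \<epsilon>: "\<And>r. r < K \<Longrightarrow> \<epsilon> r * \<epsilon> r = 1"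
  shows "det A \<noteq> 0"
proof -
  define \<rho> where "\<rho> r = r mod N + N * \<sigma> (r div N)" for r
  have div: "r div N < K" if "r < K * N" for r
    using that by (simp add: less_mult_imp_div_less mult.commute)
  have mod: "r mod N < N" if "r < K * N" for r
    using that by (metis mod_less_divisor mult_0_right neq0_conv not_less0)
  have \<rho>_iff: "c = \<rho> r \<longleftrightarrow> c mod N = r mod N \<and> c div N = \<sigma> (r div N)" if "r < K * N" for r c
    unfolding \<rho>_def using eq_add_mult_iff[OF mod[OF that]] .
  show ?thesis
  proof (rule det_signed_permutation_neq_0[OF A])
    fix r c assume rc: "r < K * N" "c < K * N"
    then show "A $$ (r, c) = (if c = \<rho> r then \<epsilon> (r div N) else 0)"
      using entries[OF rc] \<rho>_iff[OF rc(1)] by auto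
  next
    show "\<rho> ` {..<K * N} \<subseteq> {..<K * N}"
      using \<sigma>(1) div mod by (auto simp: \<rho>_def mult.commute[of K] intro!: add_mult_less)
    show "inj_on \<rho> {..<K * N}"
    proof (rule inj_onI)
      fix r r' assume r: "r \<in> {..<K * N}" and r': "r' \<in> {..<K * N}" and "\<rho> r = \<rho> r'"
      then have "r mod N = r' mod N" "\<sigma> (r div N) = \<sigma> (r' div N)"
        using \<rho>_iff[of r "\<rho> r"] \<rho>_iff[of r' "\<rho> r"] by auto
      then show "r = r'"
        using \<sigma>(2) div r r' by (metis div_mult_mod_eq inj_onD lessThan_iff)
    qed
  qed (use \<epsilon> div in auto)
qed

text \<open>Factor \<open>A = B L\<close> with \<open>L\<close> lower triangular with diagonal \<open>y 0, \<dots>, y (n - 2), 1\<close>.\<close>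

lemma det_dvd_of_column_differences:
  fixes A :: "'a::comm_ring_1 mat"
  assumes A: "A \<in> carrier_mat n n"
    and dvd: "\<And>k x. k < n \<Longrightarrow> Suc x < n \<Longrightarrow> y x dvd A $$ (k, x) - A $$ (k, Suc x)"
  shows "(\<Prod>x<n - 1. y x) dvd det A"
proof -
  have "\<forall>k x. \<exists>q. k < n \<longrightarrow> Suc x < n \<longrightarrow> A $$ (k, x) - A $$ (k, Suc x) = y x * q"
    using dvd by (auto elim!: dvdE)
  then obtain g where g: "\<And>k x. k < n \<Longrightarrow> Suc x < n \<Longrightarrow> A $$ (k, x) - A $$ (k, Suc x) = y x * g k x"
    by metis
  define w where "w l = (if Suc l < n then y l else 1)" for l
  define B where "B = mat n n (\<lambda>(k, l). if Suc l < n then g k l else A $$ (k, l))"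
  define L where "L = mat n n (\<lambda>(l, x). if x \<le> l then w l else 0)"
  have "A = B * L"
  proof (rule eq_matI)
    fix k x assume "k < dim_row (B * L)" "x < dim_col (B * L)"
    then have k: "k < n" and x: "x < n"
      by (auto simp: B_def L_def)
    define f where "f l = (if l < n then A $$ (k, l) else 0)" for l
    have "(B * L) $$ (k, x) = (\<Sum>l = 0..<n. if x \<le> l then B $$ (k, l) * w l else 0)"
      using k x by (auto simp: B_def L_def scalar_prod_def intro!: sum.cong)
    also have "\<dots> = (\<Sum>l = x..<n. B $$ (k, l) * w l)"
      using x by (intro sum.mono_neutral_cong_right) auto
    also have "\<dots> = (\<Sum>l = x..<n. f l - f (Suc l))"
      using k g by (intro sum.cong) (auto simp: B_def w_def f_def mult.commute)
    also have "\<dots> = A $$ (k, x)"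
      using sum_Suc_diff'[of x n "\<lambda>l. - f l"] x by (simp add: f_def)
    finally show "A $$ (k, x) = (B * L) $$ (k, x)" ..
  qed (use A in \<open>auto simp: B_def L_def\<close>)
  moreover have "det L = (\<Prod>x<n - 1. y x)"
  proof -
    have "det L = (\<Prod>l = 0..<n. w l)"
      by (subst det_lower_triangular[of n]) (auto simp: L_def prod_list_diag_prod)
    also have "\<dots> = (\<Prod>x<n - 1. y x)"
      by (cases n) (simp_all add: w_def atLeast0LessThan prod.lessThan_Suc)
    finally show ?thesis .
  qed
  moreover have "det (B * L) = det B * det L"
    by (rule det_mult) (auto simp: B_def L_def)
  ultimately show ?thesis
    by simp
qed

lemma det_mat_1: "det (mat 1 1 f) = f (0, 0)"
  by (simp add: det_def permutes_sing sign_id)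

lemma det_mat_2:
  fixes f :: "nat \<times> nat \<Rightarrow> 'a::comm_ring_1"
  shows "det (mat 2 2 f) = f (0, 0) * f (1, 1) - f (0, 1) * f (1, 0)"
proof -
  have "{0..<2::nat} = insert 0 {1}" by auto
  then show ?thesis
    by (simp add: det_def sum_over_permutations_insert permutes_sing sign_swap_id sign_id)
qed

lemma det_mat_3:
  fixes f :: "nat \<times> nat \<Rightarrow> 'a::comm_ring_1"
  shows "det (mat 3 3 f) =
    f (0, 0) * f (1, 1) * f (2, 2) - f (0, 0) * f (1, 2) * f (2, 1) - f (0, 1) * f (1, 0) * f (2, 2)
    + f (0, 1) * f (1, 2) * f (2, 0) + f (0, 2) * f (1, 0) * f (2, 1) - f (0, 2) * f (1, 1) * f (2, 0)"
proof -
  have "{0..<3::nat} = insert 0 (insert 1 {2})" by auto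
  then show ?thesis
    by (simp add: det_def sum_over_permutations_insert permutes_sing sign_swap_id sign_id
        permutation_swap_id sign_compose algebra_simps)
qed

section \<open>Entries of Kronecker products\<close>

text \<open>Row \<open>i\<close> of a Kronecker product of square factors of sizes \<open>ms\<close> is the tuple of rows
  \<open>kron_index ms i\<close> of the factors (mixed-radix digits of \<open>i\<close>, most significant first).\<close>

fun kron_index :: "nat list \<Rightarrow> nat \<Rightarrow> nat list" where
  "kron_index [] i = []"
| "kron_index (m # ms) i = i div prod_list ms # kron_index ms (i mod prod_list ms)"

lemma length_kron_index [simp]: "length (kron_index ms i) = length ms"
  by (induction ms arbitrary: i) simp_all

lemma kron_index_less:
  assumes "i < prod_list ms" "k < length ms"
  shows "kron_index ms i ! k < ms ! k"
  using assms
proof (induction ms arbitrary: i k)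
  case (Cons m ms)
  then have "prod_list ms \<noteq> 0"
    by (metis mult_0_right not_less0 prod_list.Cons)
  then have "i mod prod_list ms < prod_list ms"
    by (meson mod_less_divisor neq0_conv)
  with Cons show ?case
    by (cases k) (auto simp: less_mult_imp_div_less mult.commute)
qed simp

lemma kron_index_inject:
  assumes "i < prod_list ms" "j < prod_list ms"
  shows "kron_index ms i = kron_index ms j \<longleftrightarrow> i = j"
  using assms
proof (induction ms arbitrary: i j)
  case (Cons m ms)
  then have "prod_list ms \<noteq> 0"
    by (metis mult_0_right not_less0 prod_list.Cons)
  then have "i mod prod_list ms < prod_list ms" "j mod prod_list ms < prod_list ms"
    by (meson mod_less_divisor neq0_conv)+
  with Cons.IH[of "i mod prod_list ms" "j mod prod_list ms"] show ?case
    by (auto dest: arg_cong[of _ _ "\<lambda>x. x div prod_list ms"]) (metis div_mult_mod_eq)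
qed simp

lemma kron_list_index:
  assumes "\<forall>A\<in>set As. dim_col A = dim_row A"
  defines "ms \<equiv> map dim_row As"
  shows "kron_list As \<in> carrier_mat (prod_list ms) (prod_list ms)"
    and "i < prod_list ms \<Longrightarrow> j < prod_list ms \<Longrightarrow>
      kron_list As $$ (i, j) = (\<Prod>k<length As. As ! k $$ (kron_index ms i ! k, kron_index ms j ! k))"
  unfolding ms_def using assms(1)
proof (induction As arbitrary: i j)
  case (Cons A As)
  let ?P = "prod_list (map dim_row As)"
  case 2
  have "?P \<noteq> 0"
    using 2 by (metis list.simps(9) mult_0_right not_less0 prod_list.Cons)
  then have "i mod ?P < ?P" "j mod ?P < ?P"
    by (meson mod_less_divisor neq0_conv)+
  then have "kron_list As $$ (i mod ?P, j mod ?P) = (\<Prod>k<length As.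
      As ! k $$ (kron_index (map dim_row As) (i mod ?P) ! k, kron_index (map dim_row As) (j mod ?P) ! k))"
    using 2 by (intro Cons.IH(2)) simp_all
  moreover have "kron_list (A # As) $$ (i, j) =
      A $$ (i div ?P, j div ?P) * kron_list As $$ (i mod ?P, j mod ?P)"
    using Cons 2 by (simp add: kron_list_def kron_def)
  ultimately show ?case
    by (simp add: prod.lessThan_Suc_shift del: prod.lessThan_Suc)
qed (auto simp: kron_list_def kron_def)

lemma prod_list_map_upt: "prod_list (map m [0..<d]) = (\<Prod>k<d. m k)"
  by (induction d) simp_all

lemma kron_block_det_entry:
  assumes M: "\<And>k x. M k x \<in> carrier_mat (m k) (m k)"
    and ij: "i < (\<Prod>k<d. m k)" "j < (\<Prod>k<d. m k)"
  defines "\<iota> \<equiv> kron_index (map m [0..<d])"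
  shows "kron_block_det d m M $$ (i, j) = det (mat d d (\<lambda>(k, x). M k x $$ (\<iota> i ! k, \<iota> j ! k)))"
proof -
  have "kron_list (map (\<lambda>k. M k (\<sigma> k)) [0..<d]) $$ (i, j) = (\<Prod>k<d. M k (\<sigma> k) $$ (\<iota> i ! k, \<iota> j ! k))"
    for \<sigma>
  proof -
    have ms: "map dim_row (map (\<lambda>k. M k (\<sigma> k)) [0..<d]) = map m [0..<d]"
      using carrier_matD(1)[OF M] by simp
    have "\<forall>A\<in>set (map (\<lambda>k. M k (\<sigma> k)) [0..<d]). dim_col A = dim_row A"
      using carrier_matD[OF M] by simp
    from kron_list_index(2)[OF this, unfolded ms] show ?thesis
      using ij by (simp add: \<iota>_def prod_list_map_upt)
  qed
  then show ?thesis
    using ij by (simp add: kron_block_det_def det_def atLeast0LessThan)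
qed

lemma kron_block_det_dvd:
  assumes M: "\<And>k x. M k x \<in> carrier_mat (m k) (m k)"
    and ij: "i < (\<Prod>k<d. m k)" "j < (\<Prod>k<d. m k)"
    and dvd: "\<And>k x a b. k < d \<Longrightarrow> Suc x < d \<Longrightarrow> a < m k \<Longrightarrow> b < m k \<Longrightarrow>
      y x dvd M k x $$ (a, b) - M k (Suc x) $$ (a, b)"
  shows "(\<Prod>x<d - 1. y x) dvd kron_block_det d m M $$ (i, j)"
proof -
  let ?\<iota> = "kron_index (map m [0..<d])"
  have "?\<iota> i ! k < m k" "?\<iota> j ! k < m k" if "k < d" for k
    using kron_index_less[of _ "map m [0..<d]" k] ij that by (simp_all add: prod_list_map_upt)
  then show ?thesis
    unfolding kron_block_det_entry[OF M ij]
    by (intro det_dvd_of_column_differences[of _ d]) (simp_all add: dvd)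
qed

lemma (in comm_ring_hom) hom_kron_block_det_entry:
  assumes M: "\<And>k x. M k x \<in> carrier_mat (m k) (m k)"
    and V: "V \<in> carrier_mat d d"
    and hom_M: "\<And>k x a b. k < d \<Longrightarrow> x < d \<Longrightarrow> a < m k \<Longrightarrow> b < m k \<Longrightarrow>
      hom (M k x $$ (a, b)) = (if a = b then V $$ (k, x) else 0)"
    and ij: "i < (\<Prod>k<d. m k)" "j < (\<Prod>k<d. m k)"
  shows "hom (kron_block_det d m M $$ (i, j)) = (if i = j then det V else 0)"
proof -
  let ?\<iota> = "kron_index (map m [0..<d])"
  have lt: "?\<iota> i ! k < m k" "?\<iota> j ! k < m k" if "k < d" for k
    using kron_index_less[of _ "map m [0..<d]" k] ij that by (simp_all add: prod_list_map_upt)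
  let ?A = "map_mat hom (mat d d (\<lambda>(k, x). M k x $$ (?\<iota> i ! k, ?\<iota> j ! k)))"
  have A: "?A $$ (k, x) = (if ?\<iota> i ! k = ?\<iota> j ! k then V $$ (k, x) else 0)" if "k < d" "x < d" for k x
    using that lt by (simp add: hom_M)
  have "hom (kron_block_det d m M $$ (i, j)) = det ?A"
    by (simp add: kron_block_det_entry[OF M ij])
  also have "\<dots> = (if i = j then det V else 0)"
  proof (cases "i = j")
    case True
    then have "?A = V"
      using A V by (intro eq_matI) auto
    with True show ?thesis
      by simp
  next
    case False
    then have "?\<iota> i \<noteq> ?\<iota> j"
      using kron_index_inject ij by (simp add: prod_list_map_upt)
    then obtain k where "k < d" "?\<iota> i ! k \<noteq> ?\<iota> j ! k"
      using nth_equalityI[of "?\<iota> i" "?\<iota> j"] by auto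
    with False show ?thesis
      using A by (intro det_zero_row[of _ d k] trans[OF _ if_not_P[symmetric]]) auto
  qed
  finally show ?thesis .
qed

section \<open>The Dixon array\<close>

definition dixon_args :: "nat \<Rightarrow> nat \<Rightarrow> mpoly list" where
  "dixon_args d j =
     map (\<lambda>k. if k < j then mvar (vT (Suc k)) else mvar (vS (Suc k))) [0..<d - 1] @ [mvar vX]"

lemma nth_dixon_args:
  assumes "1 \<le> d" "l < d"
  shows "dixon_args d j ! l =
    (if l = d - 1 then mvar vX else if l < j then mvar (vT (Suc l)) else mvar (vS (Suc l)))"
  using assms by (auto simp: dixon_args_def nth_append)

lemma Mdixon_carrier: "Mdixon d \<tau> n k j \<in> carrier_mat (n (Suc k)) (n (Suc k))"
  by (simp add: Mdixon_def Pgen_def)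

lemma Mdixon_entry:
  assumes "a < n (Suc k)" "b < n (Suc k)"
  shows "Mdixon d \<tau> n k j $$ (a, b) =
    (\<Sum>e\<in>multi_indices d \<tau>. (\<Prod>l<d. (dixon_args d j ! l) ^ (e ! l)) * mvar (vC (Suc k) e a b))"
  using assms by (simp add: Mdixon_def Pgen_def dixon_args_def)

lemma finite_multi_indices: "finite (multi_indices d \<tau>)"
proof (rule finite_subset)
  show "multi_indices d \<tau> \<subseteq> {e. set e \<subseteq> {..(\<Sum>k<d. \<tau> (Suc k))} \<and> length e = d}"
  proof safe
    fix e x assume e: "e \<in> multi_indices d \<tau>" and "x \<in> set e"
    then obtain k where k: "k < d" "x = e ! k"
      by (auto simp: in_set_conv_nth multi_indices_def)
    then have "x \<le> \<tau> (Suc k)"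
      using e by (auto simp: multi_indices_def)
    also have "\<dots> \<le> (\<Sum>k<d. \<tau> (Suc k))"
      using k by (intro member_le_sum) auto
    finally show "x \<le> (\<Sum>k<d. \<tau> (Suc k))" .
  qed (simp add: multi_indices_def)
qed (rule finite_lists_length_eq, simp)

lemma diff_dvd_prod_power_diff:
  fixes y y' :: "nat \<Rightarrow> 'a::comm_ring_1"
  assumes "finite A" "\<And>l. l \<in> A \<Longrightarrow> l \<noteq> j \<Longrightarrow> y l = y' l"
  shows "y j - y' j dvd (\<Prod>l\<in>A. y l ^ f l) - (\<Prod>l\<in>A. y' l ^ f l)"
proof (cases "j \<in> A")
  case True
  have "(\<Prod>l\<in>A - {j}. y l ^ f l) = (\<Prod>l\<in>A - {j}. y' l ^ f l)"
    using assms(2) by (intro prod.cong) auto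
  then have "(\<Prod>l\<in>A. y l ^ f l) - (\<Prod>l\<in>A. y' l ^ f l) =
      (y j ^ f j - y' j ^ f j) * (\<Prod>l\<in>A - {j}. y' l ^ f l)"
    using assms(1) True by (simp add: prod.remove[of A j] left_diff_distrib)
  then show ?thesis
    by (simp add: power_diff_sumr2)
next
  case False
  then have "(\<Prod>l\<in>A. y l ^ f l) = (\<Prod>l\<in>A. y' l ^ f l)"
    using assms(2) by (intro prod.cong refl) metis
  then show ?thesis
    by simp
qed

lemma Mdixon_dvd:
  assumes d: "1 \<le> d" and j: "Suc j < d" and ab: "a < n (Suc k)" "b < n (Suc k)"
  shows "mvar (vS (Suc j)) - mvar (vT (Suc j)) dvd
    Mdixon d \<tau> n k j $$ (a, b) - Mdixon d \<tau> n k (Suc j) $$ (a, b)"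
proof -
  have "dixon_args d j ! j = mvar (vS (Suc j))" "dixon_args d (Suc j) ! j = mvar (vT (Suc j))"
    "\<And>l. l < d \<Longrightarrow> l \<noteq> j \<Longrightarrow> dixon_args d j ! l = dixon_args d (Suc j) ! l"
    using d j by (auto simp: nth_dixon_args)
  then have "mvar (vS (Suc j)) - mvar (vT (Suc j)) dvd
      (\<Prod>l<d. (dixon_args d j ! l) ^ (e ! l)) - (\<Prod>l<d. (dixon_args d (Suc j) ! l) ^ (e ! l))" for e
    using diff_dvd_prod_power_diff[of "{..<d}" j "\<lambda>l. dixon_args d j ! l" "\<lambda>l. dixon_args d (Suc j) ! l"]
    by simp
  then show ?thesis
    by (simp add: Mdixon_entry[where n = n and k = k, OF ab] flip: sum_subtractf left_diff_distrib)
      (intro dvd_sum dvd_mult2)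
qed

lemma Nsize_eq_prod: "Nsize d n = (\<Prod>k<d. n (Suc k))"
  by (simp add: Nsize_def prod.atLeast1_atMost_eq)

lemma kron_block_det_Mdixon_dvd:
  assumes "1 \<le> d" "i < Nsize d n" "j < Nsize d n"
  shows "(\<Prod>k\<in>{1..<d}. mvar (vS k) - mvar (vT k)) dvd
    kron_block_det d (\<lambda>k. n (Suc k)) (Mdixon d \<tau> n) $$ (i, j)"
proof -
  have "(\<Prod>k\<in>{1..<d}. mvar (vS k) - mvar (vT k)) = (\<Prod>x<d - 1. mvar (vS (Suc x)) - mvar (vT (Suc x)))"
    using assms(1) prod.shift_bounds_Suc_ivl[of "\<lambda>k. mvar (vS k) - mvar (vT k)" 0 "d - 1"]
    by (simp add: atLeast0LessThan)
  also have "\<dots> dvd kron_block_det d (\<lambda>k. n (Suc k)) (Mdixon d \<tau> n) $$ (i, j)"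
    using assms by (intro kron_block_det_dvd Mdixon_carrier Mdixon_dvd) (simp_all add: Nsize_eq_prod)
  finally show ?thesis .
qed

text \<open>The specialisation attached to a set \<open>E\<close> of pairs \<open>(i, e)\<close> turns \<open>P\<^sup>(\<^sup>i\<^sup>)\<^sub>e\<close> into the
  identity matrix if \<open>(i, e) \<in> E\<close> and into the zero matrix otherwise, so that \<open>P\<^sub>i\<close> becomes
  the scalar polynomial \<open>\<Sum>(i, e)\<in>E. x\<^sup>e\<close> times the identity.\<close>

definition zero_coeff_vars :: "(nat \<times> nat list) set \<Rightarrow> nat set" where
  "zero_coeff_vars E = {vC i e r c | i e r c. (i, e) \<notin> E \<or> r \<noteq> c}"

definition unit_coeff_vars :: "(nat \<times> nat list) set \<Rightarrow> nat set" where
  "unit_coeff_vars E = {vC i e r r | i e r. (i, e) \<in> E}"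

abbreviation specialise_coeffs :: "(nat \<times> nat list) set \<Rightarrow> mpoly \<Rightarrow> mpoly" where
  "specialise_coeffs E \<equiv> specialise (zero_coeff_vars E) (unit_coeff_vars E)"

lemma vC_in_zero_coeff_vars: "vC i e r c \<in> zero_coeff_vars E \<longleftrightarrow> (i, e) \<notin> E \<or> r \<noteq> c"
  unfolding zero_coeff_vars_def by simp

lemma vC_in_unit_coeff_vars: "vC i e r c \<in> unit_coeff_vars E \<longleftrightarrow> (i, e) \<in> E \<and> r = c"
  unfolding unit_coeff_vars_def by auto

lemma st_not_in_coeff_vars:
  "vS k \<notin> zero_coeff_vars E" "vT k \<notin> zero_coeff_vars E" "vX \<notin> zero_coeff_vars E"
  "vS k \<notin> unit_coeff_vars E" "vT k \<notin> unit_coeff_vars E" "vX \<notin> unit_coeff_vars E"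
  unfolding zero_coeff_vars_def unit_coeff_vars_def by simp_all

lemma specialise_coeffs_mvar:
  "specialise_coeffs E (mvar (vC i e r c)) = (if (i, e) \<in> E \<and> r = c then 1 else 0)"
  "specialise_coeffs E (mvar (vS k)) = mvar (vS k)"
  "specialise_coeffs E (mvar (vT k)) = mvar (vT k)"
  "specialise_coeffs E (mvar vX) = mvar vX"
  by (simp_all add: specialise_mvar vC_in_zero_coeff_vars vC_in_unit_coeff_vars st_not_in_coeff_vars)

lemma coeff_vars_disjoint_st_vars:
  "zero_coeff_vars E \<inter> st_vars d = {}" "unit_coeff_vars E \<inter> st_vars d = {}"
  using st_not_in_coeff_vars by (auto simp: st_vars_def)

lemma specialise_coeffs_dixon_args:
  assumes "1 \<le> d" "l < d"
  shows "specialise_coeffs E (dixon_args d j ! l) = dixon_args d j ! l"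
  using assms by (simp add: nth_dixon_args specialise_coeffs_mvar)

definition scalar_dixon :: "nat \<Rightarrow> (nat \<times> nat list) set \<Rightarrow> mpoly mat" where
  "scalar_dixon d E = mat d d (\<lambda>(k, j). \<Sum>e | (Suc k, e) \<in> E. \<Prod>l<d. (dixon_args d j ! l) ^ (e ! l))"

lemma specialise_Mdixon_entry:
  assumes d: "1 \<le> d" and kj: "k < d" "j < d" and ab: "a < n (Suc k)" "b < n (Suc k)"
    and E: "\<forall>(i, e)\<in>E. e \<in> multi_indices d \<tau>"
  shows "specialise_coeffs E (Mdixon d \<tau> n k j $$ (a, b)) =
    (if a = b then scalar_dixon d E $$ (k, j) else 0)"
proof -
  let ?x = "\<lambda>e. \<Prod>l<d. (dixon_args d j ! l) ^ (e ! l)"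
  have "specialise_coeffs E (?x e) = ?x e" for e
    using d by (simp add: specialise.hom_prod specialise.hom_power specialise_coeffs_dixon_args)
  then have "specialise_coeffs E (Mdixon d \<tau> n k j $$ (a, b)) =
      (\<Sum>e\<in>multi_indices d \<tau>. ?x e * (if (Suc k, e) \<in> E \<and> a = b then 1 else 0))"
    by (simp add: Mdixon_entry[where n = n and k = k, OF ab] specialise.hom_sum specialise.hom_mult
        specialise_coeffs_mvar)
  also have "\<dots> = (if a = b then \<Sum>e\<in>{e \<in> multi_indices d \<tau>. (Suc k, e) \<in> E}. ?x e else 0)"
    by (simp add: sum.inter_filter[OF finite_multi_indices] if_distrib[of "\<lambda>c. _ * c"] cong: if_cong)
  also have "{e \<in> multi_indices d \<tau>. (Suc k, e) \<in> E} = {e. (Suc k, e) \<in> E}"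
    using E by blast
  finally show ?thesis
    using kj by (simp add: scalar_dixon_def)
qed

lemma specialise_kron_block_det_Mdixon:
  assumes d: "1 \<le> d" and E: "\<forall>(i, e)\<in>E. e \<in> multi_indices d \<tau>"
    and ij: "i < Nsize d n" "j < Nsize d n"
  shows "specialise_coeffs E (kron_block_det d (\<lambda>k. n (Suc k)) (Mdixon d \<tau> n) $$ (i, j)) =
    (if i = j then det (scalar_dixon d E) else 0)"
  using ij
  by (intro specialise.hom_kron_block_det_entry Mdixon_carrier)
    (simp_all add: specialise_Mdixon_entry[OF d _ _ _ _ E] Nsize_eq_prod scalar_dixon_def)

section \<open>Reduction to a specialisation\<close>

lemma mvar_inject: "mvar v = mvar w \<longleftrightarrow> v = w"
proof
  assume "mvar v = mvar w"
  moreover have "Poly_Mapping.lookup (mvar v) (Poly_Mapping.single v 1) = 1"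
    by (simp add: mvar_def)
  ultimately have "Poly_Mapping.lookup (mvar w) (Poly_Mapping.single v 1) = 1"
    by simp
  then have "Poly_Mapping.single w (1::nat) = Poly_Mapping.single v 1"
    by (simp add: mvar_def lookup_single when_def split: if_splits)
  then show "v = w"
    by (metis lookup_single_eq lookup_single_not_eq zero_neq_one)
qed simp

lemma dixon_denominator_neq_0: "(\<Prod>k\<in>{1..<d}. mvar (vS k) - mvar (vT k)) \<noteq> 0"
  by (simp add: mvar_inject)

lemma f_dixon_mult_denominator:
  assumes "1 \<le> d" "i < Nsize d n" "j < Nsize d n"
  shows "f_dixon d \<tau> n $$ (i, j) * (\<Prod>k\<in>{1..<d}. mvar (vS k) - mvar (vT k)) =
    kron_block_det d (\<lambda>k. n (Suc k)) (Mdixon d \<tau> n) $$ (i, j)"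
proof -
  let ?D = "\<Prod>k\<in>{1..<d}. mvar (vS k) - mvar (vT k)"
  let ?B = "kron_block_det d (\<lambda>k. n (Suc k)) (Mdixon d \<tau> n)"
  have "\<exists>q. ?B $$ (i, j) = q * ?D"
    using kron_block_det_Mdixon_dvd[OF assms, of \<tau>] by (auto elim!: dvdE simp: mult.commute)
  then have "?B $$ (i, j) = exact_div (?B $$ (i, j)) ?D * ?D"
    unfolding exact_div_def by (rule someI_ex)
  then show ?thesis
    using assms by (simp add: f_dixon_def kron_block_det_def Nsize_eq_prod)
qed

lemma specialise_f_dixon:
  assumes d: "1 \<le> d" and E: "\<forall>(i, e)\<in>E. e \<in> multi_indices d \<tau>"
    and \<delta>: "det (scalar_dixon d E) = \<delta> * (\<Prod>k\<in>{1..<d}. mvar (vS k) - mvar (vT k))"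
    and ij: "i < Nsize d n" "j < Nsize d n"
  shows "specialise_coeffs E (f_dixon d \<tau> n $$ (i, j)) = (if i = j then \<delta> else 0)"
proof -
  let ?D = "\<Prod>k\<in>{1..<d}. mvar (vS k) - mvar (vT k)"
  have "specialise_coeffs E ?D = ?D"
    by (simp add: specialise.hom_prod specialise.hom_minus specialise_coeffs_mvar)
  then have "specialise_coeffs E (f_dixon d \<tau> n $$ (i, j)) * ?D =
      specialise_coeffs E (f_dixon d \<tau> n $$ (i, j) * ?D)"
    by (simp add: specialise.hom_mult)
  also have "\<dots> = (if i = j then \<delta> else 0) * ?D"
    unfolding f_dixon_mult_denominator[OF d ij] specialise_kron_block_det_Mdixon[OF d E ij] \<delta>
    by simp
  finally show ?thesis
    by (rule mult_right_cancel[THEN iffD1, OF dixon_denominator_neq_0])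
qed

lemma det_dixon_resultant_neq_0_if_specialisation:
  assumes d: "1 \<le> d" and E: "\<forall>(i, e)\<in>E. e \<in> multi_indices d \<tau>"
    and \<delta>: "det (scalar_dixon d E) = \<delta> * (\<Prod>k\<in>{1..<d}. mvar (vS k) - mvar (vT k))"
    and coeff: "\<And>cb rb. cb < nblocks d \<tau> \<Longrightarrow> rb < nblocks d \<tau> \<Longrightarrow>
      coeff_st d \<delta> (s_exp d \<tau> cb) (t_exp d \<tau> rb) = (if cb = \<sigma> rb then \<epsilon> rb else 0)"
    and \<sigma>: "\<sigma> ` {..<nblocks d \<tau>} \<subseteq> {..<nblocks d \<tau>}" "inj_on \<sigma> {..<nblocks d \<tau>}"
    and \<epsilon>: "\<And>rb. rb < nblocks d \<tau> \<Longrightarrow> \<epsilon> rb * \<epsilon> rb = 1"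
  shows "det (dixon_resultant d \<tau> n) \<noteq> 0"
proof -
  let ?N = "Nsize d n" and ?K = "nblocks d \<tau>" and ?R = "dixon_resultant d \<tau> n"
  have entries: "map_mat (specialise_coeffs E) ?R $$ (r, c) =
      (if r mod ?N = c mod ?N \<and> c div ?N = \<sigma> (r div ?N) then \<epsilon> (r div ?N) else 0)"
    if rc: "r < ?K * ?N" "c < ?K * ?N" for r c
  proof -
    have "?N \<noteq> 0"
      using rc by (metis mult_0_right not_less0)
    then have mod: "r mod ?N < ?N" "c mod ?N < ?N"
      by simp_all
    have div: "r div ?N < ?K" "c div ?N < ?K"
      using rc by (simp_all add: less_mult_imp_div_less)
    have "map_mat (specialise_coeffs E) ?R $$ (r, c) =
        coeff_st d (specialise_coeffs E (f_dixon d \<tau> n $$ (r mod ?N, c mod ?N)))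
          (s_exp d \<tau> (c div ?N)) (t_exp d \<tau> (r div ?N))"
      using rc by (simp add: dixon_resultant_def Let_def specialise_coeff_st coeff_vars_disjoint_st_vars)
    also have "\<dots> = (if r mod ?N = c mod ?N \<and> c div ?N = \<sigma> (r div ?N) then \<epsilon> (r div ?N) else 0)"
      using mod div by (simp add: specialise_f_dixon[OF d E \<delta>] coeff_st.zero coeff)
    finally show ?thesis .
  qed
  have "det (map_mat (specialise_coeffs E) ?R) \<noteq> 0"
    by (rule det_block_signed_permutation_neq_0[OF _ entries \<sigma> \<epsilon>])
      (simp add: dixon_resultant_def Let_def)
  then show ?thesis
    by auto
qed

section \<open>The cases \<open>d = 1, 2, 3\<close>\<close>

lemma det_dixon_resultant_1_neq_0: "det (dixon_resultant 1 \<tau> n) \<noteq> 0"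
proof (rule det_dixon_resultant_neq_0_if_specialisation[where E = "{(1, [0])}" and \<delta> = 1 and \<sigma> = id])
  show "\<forall>(i, e)\<in>{(1, [0])}. e \<in> multi_indices 1 \<tau>"
    by (simp add: multi_indices_def)
  show "det (scalar_dixon 1 {(1, [0])}) = 1 * (\<Prod>k\<in>{1..<1}. mvar (vS k) - mvar (vT k))"
    unfolding scalar_dixon_def det_mat_1 by simp
  have "coeff_st 1 1 a b = 1" for a b
    using coeff_st_st_monomial[of 1 a b a b] by (simp add: st_monomial_def)
  then show "coeff_st 1 1 (s_exp 1 \<tau> cb) (t_exp 1 \<tau> rb) = (if cb = id rb then 1 else 0)"
    if "cb < nblocks 1 \<tau>" "rb < nblocks 1 \<tau>" for cb rb
    using that by (simp add: nblocks_def)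
qed auto

definition specialisation_2 :: "(nat \<Rightarrow> nat) \<Rightarrow> (nat \<times> nat list) set" where
  "specialisation_2 \<tau> = {(1, [\<tau> 1, 0]), (2, [0, 0])}"

definition dixon_quotient_2 :: "(nat \<Rightarrow> nat) \<Rightarrow> mpoly" where
  "dixon_quotient_2 \<tau> = (\<Sum>i<\<tau> 1. st_monomial 2 (\<lambda>_. i) (\<lambda>_. \<tau> 1 - Suc i))"

lemma det_scalar_dixon_2:
  "det (scalar_dixon 2 (specialisation_2 \<tau>)) =
    dixon_quotient_2 \<tau> * (\<Prod>k\<in>{1..<2}. mvar (vS k) - mvar (vT k))"
proof -
  have "{e. (Suc 0, e) \<in> specialisation_2 \<tau>} = {[\<tau> 1, 0]}"
    "{e. (Suc 1, e) \<in> specialisation_2 \<tau>} = {[0, 0]}"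
    by (auto simp: specialisation_2_def)
  then have "det (scalar_dixon 2 (specialisation_2 \<tau>)) = mvar (vS 1) ^ \<tau> 1 - mvar (vT 1) ^ \<tau> 1"
    unfolding scalar_dixon_def det_mat_2 by (simp add: nth_dixon_args lessThan_nat_numeral)
  moreover have "{1..<2::nat} = {1}"
    by auto
  ultimately show ?thesis
    unfolding dixon_quotient_2_def st_monomial_def by (simp add: power_diff_sumr2 mult.commute)
qed

lemma nblocks_2: "nblocks 2 \<tau> = \<tau> 1"
proof -
  have "{1..<2::nat} = {1}"
    by auto
  then show ?thesis
    by (simp add: nblocks_def)
qed

lemma coeff_st_dixon_quotient_2_blocks:
  assumes "cb < nblocks 2 \<tau>" "rb < nblocks 2 \<tau>"
  shows "coeff_st 2 (dixon_quotient_2 \<tau>) (s_exp 2 \<tau> cb) (t_exp 2 \<tau> rb) =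
    (if cb = \<tau> 1 - Suc rb then 1 else 0)"
proof -
  have cb: "cb < \<tau> 1" and rb: "rb < \<tau> 1"
    using assms by (simp_all add: nblocks_2)
  have "{1..<2::nat} = {1}"
    by auto
  then have "coeff_st 2 (dixon_quotient_2 \<tau>) (s_exp 2 \<tau> cb) (t_exp 2 \<tau> rb) =
      (\<Sum>i<\<tau> 1. if i = cb \<and> \<tau> 1 - Suc i = rb then 1 else 0)"
    unfolding dixon_quotient_2_def coeff_st.sum coeff_st_st_monomial using cb rb
    by (simp add: s_exp_def t_exp_def)
  also have "\<dots> = (\<Sum>i<\<tau> 1. if i = cb then if \<tau> 1 - Suc cb = rb then 1 else 0 else 0)"
    by (intro sum.cong) auto
  also have "\<dots> = (if cb = \<tau> 1 - Suc rb then 1 else 0)"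
    using cb rb by auto
  finally show ?thesis .
qed

lemma det_dixon_resultant_2_neq_0: "det (dixon_resultant 2 \<tau> n) \<noteq> 0"
proof (rule det_dixon_resultant_neq_0_if_specialisation[where E = "specialisation_2 \<tau>"
      and \<delta> = "dixon_quotient_2 \<tau>" and \<sigma> = "\<lambda>rb. \<tau> 1 - Suc rb" and \<epsilon> = "\<lambda>_. 1"])
  show "\<forall>(i, e)\<in>specialisation_2 \<tau>. e \<in> multi_indices 2 \<tau>"
    by (auto simp: specialisation_2_def multi_indices_def less_2_cases_iff)
  show "(\<lambda>rb. \<tau> 1 - Suc rb) ` {..<nblocks 2 \<tau>} \<subseteq> {..<nblocks 2 \<tau>}"
    "inj_on (\<lambda>rb. \<tau> 1 - Suc rb) {..<nblocks 2 \<tau>}"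
    by (auto simp: nblocks_2 inj_on_def)
qed (simp_all add: det_scalar_dixon_2 coeff_st_dixon_quotient_2_blocks)

lemma st_monomial_3:
  "st_monomial 3 a b = mvar (vS 1) ^ a 1 * mvar (vT 1) ^ b 1 * (mvar (vS 2) ^ a 2 * mvar (vT 2) ^ b 2)"
proof -
  have "{1..<3::nat} = {1, 2}"
    by auto
  then show ?thesis
    by (simp add: st_monomial_def)
qed

definition specialisation_3 :: "(nat \<Rightarrow> nat) \<Rightarrow> (nat \<times> nat list) set" where
  "specialisation_3 \<tau> = {(1, [\<tau> 1, 0, 0]), (2, [0, \<tau> 2, 0]), (3, [0, 0, 0]), (3, [\<tau> 1, \<tau> 2, 0])}"

lemma det_scalar_dixon_3:
  assumes "0 < \<tau> 1"
  shows "det (scalar_dixon 3 (specialisation_3 \<tau>)) =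
    (mvar (vS 1) ^ \<tau> 1 - mvar (vT 1) ^ \<tau> 1) * (mvar (vS 2) ^ \<tau> 2 - mvar (vT 2) ^ \<tau> 2) *
    (1 - mvar (vT 1) ^ \<tau> 1 * mvar (vS 2) ^ \<tau> 2)"
proof -
  have "{e. (Suc 0, e) \<in> specialisation_3 \<tau>} = {[\<tau> 1, 0, 0]}"
    "{e. (Suc 1, e) \<in> specialisation_3 \<tau>} = {[0, \<tau> 2, 0]}"
    "{e. (Suc 2, e) \<in> specialisation_3 \<tau>} = {[0, 0, 0], [\<tau> 1, \<tau> 2, 0]}"
    by (auto simp: specialisation_3_def)
  moreover have "[0, 0, 0] \<noteq> [\<tau> 1, \<tau> 2, 0::nat]"
    using assms by simp
  moreover have "{..<3::nat} = {0, 1, 2}"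
    by auto
  ultimately show ?thesis
    unfolding scalar_dixon_def det_mat_3
    by (simp add: nth_dixon_args algebra_simps flip: One_nat_def)
qed

definition dixon_quotient_3 :: "(nat \<Rightarrow> nat) \<Rightarrow> mpoly" where
  "dixon_quotient_3 \<tau> = (\<Sum>i<\<tau> 1. \<Sum>j<\<tau> 2.
     st_monomial 3 (\<lambda>k. if k = 1 then i else j)
       (\<lambda>k. if k = 1 then \<tau> 1 - Suc i else \<tau> 2 - Suc j)
   - st_monomial 3 (\<lambda>k. if k = 1 then i else \<tau> 2 + j)
       (\<lambda>k. if k = 1 then \<tau> 1 + (\<tau> 1 - Suc i) else \<tau> 2 - Suc j))"

lemma dixon_quotient_3_mult_denominator:
  "(mvar (vS 1) ^ \<tau> 1 - mvar (vT 1) ^ \<tau> 1) * (mvar (vS 2) ^ \<tau> 2 - mvar (vT 2) ^ \<tau> 2) *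
    (1 - mvar (vT 1) ^ \<tau> 1 * mvar (vS 2) ^ \<tau> 2) =
   dixon_quotient_3 \<tau> * (\<Prod>k\<in>{1..<3}. mvar (vS k) - mvar (vT k))"
proof -
  let ?s1 = "mvar (vS 1)" and ?t1 = "mvar (vT 1)" and ?s2 = "mvar (vS 2)" and ?t2 = "mvar (vT 2)"
  let ?g = "\<lambda>i j. (?t1 ^ (\<tau> 1 - Suc i) * ?s1 ^ i) * (?t2 ^ (\<tau> 2 - Suc j) * ?s2 ^ j)"
  have "st_monomial 3 (\<lambda>k. if k = 1 then i else j)
      (\<lambda>k. if k = 1 then \<tau> 1 - Suc i else \<tau> 2 - Suc j) = ?g i j"
    "st_monomial 3 (\<lambda>k. if k = 1 then i else \<tau> 2 + j)
      (\<lambda>k. if k = 1 then \<tau> 1 + (\<tau> 1 - Suc i) else \<tau> 2 - Suc j) =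
      ?g i j * (?t1 ^ \<tau> 1 * ?s2 ^ \<tau> 2)"
    for i j
    by (simp_all add: st_monomial_3 power_add algebra_simps)
  then have "dixon_quotient_3 \<tau> = (\<Sum>i<\<tau> 1. \<Sum>j<\<tau> 2. ?g i j * (1 - ?t1 ^ \<tau> 1 * ?s2 ^ \<tau> 2))"
    unfolding dixon_quotient_3_def by (simp only: right_diff_distrib mult_1_right)
  also have "\<dots> = (\<Sum>i<\<tau> 1. ?t1 ^ (\<tau> 1 - Suc i) * ?s1 ^ i) * (\<Sum>j<\<tau> 2. ?t2 ^ (\<tau> 2 - Suc j) * ?s2 ^ j) *
      (1 - ?t1 ^ \<tau> 1 * ?s2 ^ \<tau> 2)"
    by (subst sum_product) (simp only: sum_distrib_right)
  finally have quotient: "dixon_quotient_3 \<tau> = \<dots>" .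
  have "{1..<3::nat} = {1, 2}"
    by auto
  then have "(\<Prod>k\<in>{1..<3}. mvar (vS k) - mvar (vT k)) = (?s1 - ?t1) * (?s2 - ?t2)"
    by simp
  then show ?thesis
    unfolding quotient power_diff_sumr2[of ?s1] power_diff_sumr2[of ?s2] by (simp only: mult_ac)
qed

lemma sum_sum_if_eq:
  fixes A B x y :: nat
  shows "(\<Sum>i<A. \<Sum>j<B. if i = x \<and> j = y then c else 0) = (if x < A \<and> y < B then c else 0)"
proof -
  have "(\<Sum>i<A. \<Sum>j<B. if i = x \<and> j = y then c else 0) =
      (\<Sum>i<A. if i = x then \<Sum>j<B. if j = y then c else 0 else 0)"
    by (intro sum.cong) auto
  then show ?thesis
    by simp
qed

lemma coeff_st_dixon_quotient_3:
  "coeff_st 3 (dixon_quotient_3 \<tau>) a b =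
     (if a 1 < \<tau> 1 \<and> a 2 < \<tau> 2 \<and> b 1 = \<tau> 1 - Suc (a 1) \<and> b 2 = \<tau> 2 - Suc (a 2) then 1 else 0)
   - (if a 1 < \<tau> 1 \<and> a 2 - \<tau> 2 < \<tau> 2 \<and> \<tau> 2 \<le> a 2 \<and> b 1 = \<tau> 1 + (\<tau> 1 - Suc (a 1))
        \<and> b 2 = 2 * \<tau> 2 - Suc (a 2) then 1 else 0)"
proof -
  have three: "{1..<3::nat} = {1, 2}"
    by auto
  have "coeff_st 3 (st_monomial 3 (\<lambda>k. if k = 1 then i else j)
      (\<lambda>k. if k = 1 then \<tau> 1 - Suc i else \<tau> 2 - Suc j)) a b =
    (if i = a 1 \<and> j = a 2 then if b 1 = \<tau> 1 - Suc (a 1) \<and> b 2 = \<tau> 2 - Suc (a 2) then 1 else 0 else 0)"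
    "coeff_st 3 (st_monomial 3 (\<lambda>k. if k = 1 then i else \<tau> 2 + j)
      (\<lambda>k. if k = 1 then \<tau> 1 + (\<tau> 1 - Suc i) else \<tau> 2 - Suc j)) a b =
    (if i = a 1 \<and> j = a 2 - \<tau> 2 then
       if \<tau> 2 \<le> a 2 \<and> b 1 = \<tau> 1 + (\<tau> 1 - Suc (a 1)) \<and> b 2 = 2 * \<tau> 2 - Suc (a 2) then 1 else 0 else 0)"
    if "j < \<tau> 2" for i j
    using that unfolding coeff_st_st_monomial three by auto
  then have "coeff_st 3 (dixon_quotient_3 \<tau>) a b =
      (\<Sum>i<\<tau> 1. \<Sum>j<\<tau> 2. if i = a 1 \<and> j = a 2 then
         if b 1 = \<tau> 1 - Suc (a 1) \<and> b 2 = \<tau> 2 - Suc (a 2) then 1 else 0 else 0)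
    - (\<Sum>i<\<tau> 1. \<Sum>j<\<tau> 2. if i = a 1 \<and> j = a 2 - \<tau> 2 then
         if \<tau> 2 \<le> a 2 \<and> b 1 = \<tau> 1 + (\<tau> 1 - Suc (a 1)) \<and> b 2 = 2 * \<tau> 2 - Suc (a 2) then 1 else 0 else 0)"
    unfolding dixon_quotient_3_def coeff_st.sum coeff_st.diff sum_subtractf by simp
  then show ?thesis
    unfolding sum_sum_if_eq by auto
qed

text \<open>The row block with \<open>t\<close>-exponents \<open>(b\<^sub>1, b\<^sub>2)\<close> meets \<open>dixon_quotient_3\<close> only in the column block
  with \<open>s\<close>-exponents \<open>(\<tau>\<^sub>1 - 1 - b\<^sub>1, \<tau>\<^sub>2 - 1 - b\<^sub>2)\<close> if \<open>b\<^sub>1 < \<tau>\<^sub>1\<close>, and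
  \<open>(2 \<tau>\<^sub>1 - 1 - b\<^sub>1, 2 \<tau>\<^sub>2 - 1 - b\<^sub>2)\<close> otherwise.\<close>

definition block_perm_3 :: "(nat \<Rightarrow> nat) \<Rightarrow> nat \<Rightarrow> nat" where
  "block_perm_3 \<tau> rb =
     (let b\<^sub>1 = rb mod (2 * \<tau> 1); b\<^sub>2 = rb div (2 * \<tau> 1) in
      if b\<^sub>1 < \<tau> 1 then (\<tau> 1 - Suc b\<^sub>1) + \<tau> 1 * (\<tau> 2 - Suc b\<^sub>2)
      else (2 * \<tau> 1 - Suc b\<^sub>1) + \<tau> 1 * (2 * \<tau> 2 - Suc b\<^sub>2))"

lemma nblocks_3: "nblocks 3 \<tau> = \<tau> 1 * (2 * \<tau> 2)"
proof -
  have "{1..<3::nat} = {1, 2}"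
    by auto
  then show ?thesis
    by (simp add: nblocks_def)
qed

lemma block_exps_3:
  assumes "cb < nblocks 3 \<tau>" "rb < nblocks 3 \<tau>"
  shows "s_exp 3 \<tau> cb 1 = cb mod \<tau> 1" "s_exp 3 \<tau> cb 2 = cb div \<tau> 1"
    "t_exp 3 \<tau> rb 1 = rb mod (2 * \<tau> 1)" "t_exp 3 \<tau> rb 2 = rb div (2 * \<tau> 1)"
proof -
  have "{1..<1::nat} = {}" "{1..<2::nat} = {1}"
    by auto
  moreover have "cb div \<tau> 1 < 2 * \<tau> 2" "rb div (2 * \<tau> 1) < \<tau> 2"
    using assms by (simp_all add: nblocks_3 less_mult_imp_div_less mult.commute mult.left_commute)
  ultimately show "s_exp 3 \<tau> cb 1 = cb mod \<tau> 1" "s_exp 3 \<tau> cb 2 = cb div \<tau> 1"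
    "t_exp 3 \<tau> rb 1 = rb mod (2 * \<tau> 1)" "t_exp 3 \<tau> rb 2 = rb div (2 * \<tau> 1)"
    by (simp_all add: s_exp_def t_exp_def)
qed

lemma coeff_st_dixon_quotient_3_blocks:
  assumes cb: "cb < nblocks 3 \<tau>" and rb: "rb < nblocks 3 \<tau>"
  shows "coeff_st 3 (dixon_quotient_3 \<tau>) (s_exp 3 \<tau> cb) (t_exp 3 \<tau> rb) =
    (if cb = block_perm_3 \<tau> rb then if rb mod (2 * \<tau> 1) < \<tau> 1 then 1 else -1 else 0)"
proof -
  obtain t\<^sub>1 t\<^sub>2 where t: "\<tau> 1 = t\<^sub>1" "\<tau> 2 = t\<^sub>2"
    by blast
  define a\<^sub>1 a\<^sub>2 b\<^sub>1 b\<^sub>2 where "a\<^sub>1 = cb mod t\<^sub>1" and "a\<^sub>2 = cb div t\<^sub>1"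
    and "b\<^sub>1 = rb mod (2 * t\<^sub>1)" and "b\<^sub>2 = rb div (2 * t\<^sub>1)"
  have "0 < t\<^sub>1"
    using cb unfolding nblocks_3 t by (metis mult_is_0 neq0_conv not_less0)
  then have bounds: "a\<^sub>1 < t\<^sub>1" "a\<^sub>2 < 2 * t\<^sub>2" "b\<^sub>1 < 2 * t\<^sub>1" "b\<^sub>2 < t\<^sub>2"
    using cb rb unfolding nblocks_3 t
    by (simp_all add: a\<^sub>1_def a\<^sub>2_def b\<^sub>1_def b\<^sub>2_def less_mult_imp_div_less mult.commute mult.left_commute)
  have iff: "cb = block_perm_3 \<tau> rb \<longleftrightarrow>
      (if b\<^sub>1 < t\<^sub>1 then a\<^sub>1 = t\<^sub>1 - Suc b\<^sub>1 \<and> a\<^sub>2 = t\<^sub>2 - Suc b\<^sub>2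
       else a\<^sub>1 = 2 * t\<^sub>1 - Suc b\<^sub>1 \<and> a\<^sub>2 = 2 * t\<^sub>2 - Suc b\<^sub>2)"
  proof (cases "b\<^sub>1 < t\<^sub>1")
    case True
    then show ?thesis
      unfolding block_perm_3_def Let_def t b\<^sub>1_def [symmetric] b\<^sub>2_def [symmetric]
      using eq_add_mult_iff[of "t\<^sub>1 - Suc b\<^sub>1" t\<^sub>1 cb "t\<^sub>2 - Suc b\<^sub>2"] by (simp add: a\<^sub>1_def a\<^sub>2_def)
  next
    case False
    then show ?thesis
      unfolding block_perm_3_def Let_def t b\<^sub>1_def [symmetric] b\<^sub>2_def [symmetric]
      using eq_add_mult_iff[of "2 * t\<^sub>1 - Suc b\<^sub>1" t\<^sub>1 cb "2 * t\<^sub>2 - Suc b\<^sub>2"] bounds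
      by (simp add: a\<^sub>1_def a\<^sub>2_def)
  qed
  show ?thesis
    unfolding coeff_st_dixon_quotient_3 block_exps_3[OF cb rb] t a\<^sub>1_def [symmetric] a\<^sub>2_def [symmetric]
      b\<^sub>1_def [symmetric] b\<^sub>2_def [symmetric] iff
    using bounds by auto
qed

lemma block_perm_3_bij:
  "block_perm_3 \<tau> ` {..<nblocks 3 \<tau>} \<subseteq> {..<nblocks 3 \<tau>}" "inj_on (block_perm_3 \<tau>) {..<nblocks 3 \<tau>}"
proof -
  obtain t\<^sub>1 t\<^sub>2 where t: "\<tau> 1 = t\<^sub>1" "\<tau> 2 = t\<^sub>2"
    by blast
  define b\<^sub>1 b\<^sub>2 where "b\<^sub>1 rb = rb mod (2 * t\<^sub>1)" and "b\<^sub>2 rb = rb div (2 * t\<^sub>1)" for rb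
  define x\<^sub>1 x\<^sub>2 where
    "x\<^sub>1 rb = (if b\<^sub>1 rb < t\<^sub>1 then t\<^sub>1 - Suc (b\<^sub>1 rb) else 2 * t\<^sub>1 - Suc (b\<^sub>1 rb))" and
    "x\<^sub>2 rb = (if b\<^sub>1 rb < t\<^sub>1 then t\<^sub>2 - Suc (b\<^sub>2 rb) else 2 * t\<^sub>2 - Suc (b\<^sub>2 rb))" for rb
  have K: "nblocks 3 \<tau> = t\<^sub>1 * (2 * t\<^sub>2)"
    unfolding nblocks_3 t ..
  have perm: "block_perm_3 \<tau> rb = x\<^sub>1 rb + t\<^sub>1 * x\<^sub>2 rb" for rb
    unfolding block_perm_3_def Let_def t x\<^sub>1_def x\<^sub>2_def b\<^sub>1_def b\<^sub>2_def by simp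
  have digits: "b\<^sub>1 rb < 2 * t\<^sub>1" "b\<^sub>2 rb < t\<^sub>2" if "rb \<in> {..<nblocks 3 \<tau>}" for rb
    using that unfolding K b\<^sub>1_def b\<^sub>2_def
    by (auto simp: less_mult_imp_div_less mult.commute mult.left_commute
        intro!: mod_less_divisor Nat.gr0I)
  then have x: "x\<^sub>1 rb < t\<^sub>1" "x\<^sub>2 rb < 2 * t\<^sub>2" if "rb \<in> {..<nblocks 3 \<tau>}" for rb
    using digits[OF that] by (auto simp: x\<^sub>1_def x\<^sub>2_def)
  then show "block_perm_3 \<tau> ` {..<nblocks 3 \<tau>} \<subseteq> {..<nblocks 3 \<tau>}"
    by (auto simp: perm K intro: add_mult_less)
  show "inj_on (block_perm_3 \<tau>) {..<nblocks 3 \<tau>}"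
  proof (rule inj_onI)
    fix r r' assume r: "r \<in> {..<nblocks 3 \<tau>}" and r': "r' \<in> {..<nblocks 3 \<tau>}"
      and "block_perm_3 \<tau> r = block_perm_3 \<tau> r'"
    then have "x\<^sub>1 r + t\<^sub>1 * x\<^sub>2 r = x\<^sub>1 r' + t\<^sub>1 * x\<^sub>2 r'"
      by (simp add: perm)
    with x(1)[OF r] x(1)[OF r'] have "x\<^sub>1 r = x\<^sub>1 r'" "x\<^sub>2 r = x\<^sub>2 r'"
      by (metis eq_add_mult_iff)+
    with digits[OF r] digits[OF r'] have "b\<^sub>1 r = b\<^sub>1 r'" "b\<^sub>2 r = b\<^sub>2 r'"
      by (auto simp: x\<^sub>1_def x\<^sub>2_def split: if_splits)
    then show "r = r'"
      unfolding b\<^sub>1_def b\<^sub>2_def by (metis div_mult_mod_eq)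
  qed
qed

lemma det_dixon_resultant_3_neq_0:
  assumes "0 < \<tau> 1"
  shows "det (dixon_resultant 3 \<tau> n) \<noteq> 0"
proof (rule det_dixon_resultant_neq_0_if_specialisation[where E = "specialisation_3 \<tau>"
      and \<delta> = "dixon_quotient_3 \<tau>" and \<sigma> = "block_perm_3 \<tau>"
      and \<epsilon> = "\<lambda>rb. if rb mod (2 * \<tau> 1) < \<tau> 1 then 1 else -1"])
  have "(\<forall>k<3. P k) \<longleftrightarrow> P 0 \<and> P 1 \<and> P 2" for P :: "nat \<Rightarrow> bool"
    by (auto simp: numeral_3_eq_3 numeral_2_eq_2 less_Suc_eq)
  then show "\<forall>(i, e)\<in>specialisation_3 \<tau>. e \<in> multi_indices 3 \<tau>"
    by (simp add: specialisation_3_def multi_indices_def flip: One_nat_def)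
  show "det (scalar_dixon 3 (specialisation_3 \<tau>)) =
      dixon_quotient_3 \<tau> * (\<Prod>k\<in>{1..<3}. mvar (vS k) - mvar (vT k))"
    unfolding det_scalar_dixon_3[where \<tau> = \<tau>, OF assms] by (rule dixon_quotient_3_mult_denominator)
next
  fix cb rb assume "cb < nblocks 3 \<tau>" "rb < nblocks 3 \<tau>"
  then show "coeff_st 3 (dixon_quotient_3 \<tau>) (s_exp 3 \<tau> cb) (t_exp 3 \<tau> rb) =
      (if cb = block_perm_3 \<tau> rb then if rb mod (2 * \<tau> 1) < \<tau> 1 then 1 else -1 else 0)"
    by (rule coeff_st_dixon_quotient_3_blocks)
qed (use block_perm_3_bij in auto)

theorem theorem4p3:
  fixes d :: nat and \<tau> n :: "nat \<Rightarrow> nat"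
  assumes "1 \<le> d" and "d \<le> 3"
    and "\<forall>k\<in>{1..d}. 0 < \<tau> k" and "\<forall>k\<in>{1..d}. 0 < n k"
  shows "det (dixon_resultant d \<tau> n) \<noteq> 0"
proof -
  have "d = 1 \<or> d = 2 \<or> d = 3"
    using assms(1,2) by arith
  then show ?thesis
    using assms(3) det_dixon_resultant_1_neq_0 det_dixon_resultant_2_neq_0 det_dixon_resultant_3_neq_0
    by fastforce
qed

end
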